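(* There exists a constant $\kappa>0$ such that for all $0<T\le\infty$, all $u\in Z_{6,T}$ and all $\theta\in L^2(0,T;L^{3/2}(\mathbb{R}^3))$, $\|C(u,\theta)\|_{L^2(0,T;L^{3/2}(\mathbb{R}^3))}\le\kappa\|u\|_{Z_{6,T}}\|\theta\|_{L^2(0,T;L^{3/2}(\mathbb{R}^3))}$.
   Context: $(e^{t\Delta})_{t\ge0}$ is the heat semigroup on $\mathbb{R}^3$; $C(u,\theta)(t)=-\int_0^t e^{(t-s)\Delta}\operatorname{div}(\theta(s)u(s))\,ds$. For $1\le p\le\infty$ and $0<T\le\infty$, $Z_{p,T}$ is the space of vector fields $u\in L^1_{\mathrm{loc}}(0,T;L^p(\mathbb{R}^3)^3)$ with $\|u\|_{Z_{p,T}}=\operatorname{ess\,sup}_{t\in(0,T)}t^{\frac12(1-\frac3p)}\|u(t)\|_{L^p}<\infty$; in particular $\|u\|_{Z_{6,T}}=\operatorname{ess\,sup}_t t^{1/4}\|u(t)\|_{L^6}$. *)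

theory Defs
  imports "HOL-Analysis.Analysis" "HOL-Probability.Essential_Supremum"
begin

definition ennpow :: "ennreal \<Rightarrow> real \<Rightarrow> ennreal" where
  "ennpow x a = (if x = \<infinity> then \<infinity> else ennreal (enn2real x powr a))"

definition tint :: "ereal \<Rightarrow> real set" where
  "tint T = {t. 0 < t \<and> ereal t < T}"

text \<open>L^p norm on R^3 (value infinity if the function is not in L^p).\<close>
definition Lp_norm :: "real \<Rightarrow> (real^3 \<Rightarrow> 'b::real_normed_vector) \<Rightarrow> ennreal" where
  "Lp_norm p f = ennpow (\<integral>\<^sup>+ x. ennreal (norm (f x) powr p) \<partial>lborel) (1 / p)"

definition L2Lp_norm :: "ereal \<Rightarrow> real \<Rightarrow> (real \<Rightarrow> real^3 \<Rightarrow> 'b::real_normed_vector) \<Rightarrow> ennreal" where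
  "L2Lp_norm T p f = ennpow (\<integral>\<^sup>+ t \<in> tint T. (Lp_norm p (f t))\<^sup>2 \<partial>lborel) (1 / 2)"

definition Z_norm :: "real \<Rightarrow> ereal \<Rightarrow> (real \<Rightarrow> real^3 \<Rightarrow> real^3) \<Rightarrow> ennreal" where
  "Z_norm p T u = esssup (restrict_space lborel (tint T))
      (\<lambda>t. ennreal (t powr (1/2 * (1 - 3 / p))) * Lp_norm p (u t))"

definition heat_kernel :: "real \<Rightarrow> real^3 \<Rightarrow> real" where
  "heat_kernel \<tau> z = (4 * pi * \<tau>) powr (-3/2) * exp (- (norm z)\<^sup>2 / (4 * \<tau>))"

definition grad_heat_kernel :: "real \<Rightarrow> real^3 \<Rightarrow> real^3" where
  "grad_heat_kernel \<tau> z = (- heat_kernel \<tau> z / (2 * \<tau>)) *\<^sub>R z"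

text \<open>(e^{\<tau>\<Delta>} div f)(x) = \<integral> \<nabla>G_\<tau>(x-y) \<cdot> f(y) dy, so
  C(u,\<theta>)(t)(x) = - \<integral>_0^t \<integral> \<nabla>G_{t-s}(x-y) \<cdot> \<theta>(s,y) u(s,y) dy ds.\<close>
definition Cop :: "(real \<Rightarrow> real^3 \<Rightarrow> real^3) \<Rightarrow> (real \<Rightarrow> real^3 \<Rightarrow> real) \<Rightarrow> real \<Rightarrow> real^3 \<Rightarrow> real" where
  "Cop u \<theta> t x = - (\<integral> s. (\<integral> y. grad_heat_kernel (t - s) (x - y) \<bullet> (\<theta> s y *\<^sub>R u s y) \<partial>lborel)
                     \<partial>(restrict_space lborel {0<..<t}))"

end

(*
  Write C(u,theta)(t,x) = - int_0^t int grad G_(t-s)(x-y) . theta(s,y) u(s,y) dy ds, so that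
  |C(t,x)| <= int_0^t int |grad G_(t-s)(x-y)| |theta(s,y)| |u(s,y)| dy ds.  Hoelder in (s,y) with
  exponents 3/2, 6, 6, the bound ||u(s)||_6 <= Z s^(-1/4) and the scaling
  ||grad G_tau||_(6/5)^(6/5) = K tau^(-9/10) give
    ||C(t)||_(3/2)^(3/2) <= c Z^(3/2) t^(-1/10) int_0^t (t-s)^(-9/10) ||theta(s)||_(3/2)^(3/2) ds.
  Hoelder in s with exponents 4/3, 4 turns this into
    ||C(t)||_(3/2)^2 <= c Z^2 t^(-13/60) int_0^t (t-s)^(-19/20) s^(1/6) ||theta(s)||_(3/2)^2 ds,
  and integrating over t, with int_s^oo t^(-13/60) (t-s)^(-19/20) dt <= c s^(-1/6), gives the
  L^2(0,T; L^(3/2)) bound.  All integrals are taken in ennreal, so no integrability side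
  conditions arise; in particular the Bochner integrals in C are estimated whatever their value.
*)

theory Submission
  imports Defs "HOL-Probability.Distributions"
begin

section \<open>Powers in \<open>ennreal\<close> and Hoelder's inequality\<close>

lemma ennpow_ennreal: "0 \<le> r \<Longrightarrow> ennpow (ennreal r) a = ennreal (r powr a)"
  by (simp add: ennpow_def)

lemma ennpow_0 [simp]: "ennpow 0 a = 0"
  by (simp add: ennpow_def)

lemma ennpow_top [simp]: "ennpow top a = top"
  by (simp add: ennpow_def infinity_ennreal_def)

lemma ennpow_eq_0_iff: "ennpow x a = 0 \<longleftrightarrow> x = 0"
  by (cases x) (auto simp: ennpow_def)

lemma ennpow_eq_top_iff: "ennpow x a = top \<longleftrightarrow> x = top"
  by (simp add: ennpow_def infinity_ennreal_def)

lemma ennpow_1 [simp]: "ennpow x 1 = x"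
  by (cases x) (auto simp: ennpow_def)

lemma ennpow_mono: "x \<le> y \<Longrightarrow> 0 \<le> a \<Longrightarrow> ennpow x a \<le> ennpow y a"
  by (cases x; cases y) (auto simp: ennpow_def top_unique intro!: ennreal_leI powr_mono2)

lemma ennpow_mult: "0 < a \<Longrightarrow> ennpow (x * y) a = ennpow x a * ennpow y a"
  by (cases x; cases y)
    (auto simp: ennpow_def ennreal_mult'[symmetric] powr_mult ennreal_mult_eq_top_iff
      ennreal_top_mult ennreal_mult_top)

lemma ennpow_ennpow: "0 \<le> a \<Longrightarrow> ennpow (ennpow x a) b = ennpow x (a * b)"
  by (cases x) (auto simp: ennpow_def powr_powr)

lemma ennpow_indicator: "0 < a \<Longrightarrow> ennpow (indicator A x) a = indicator A x"
  by (simp add: indicator_def ennpow_def)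

lemma ennpow_2: "ennpow x 2 = x\<^sup>2"
  by (cases x) (auto simp: ennpow_def ennreal_power powr_realpow[symmetric] top_power_ennreal)

lemma measurable_ennpow [measurable]:
  assumes [measurable]: "f \<in> borel_measurable M"
  shows "(\<lambda>x. ennpow (f x) a) \<in> borel_measurable M"
  unfolding ennpow_def by measurable

lemma Young_ennreal:
  fixes p q c :: real
  assumes pq: "1 < p" "1 < q" "1/p + 1/q = 1" and c: "0 < c"
  shows "x * y \<le> ennreal (c powr p / p) * ennpow x p + ennreal (c powr (-q) / q) * ennpow y q"
proof (cases "x = top \<or> y = top")
  case True
  have "0 < ennreal (c powr p / p)" "0 < ennreal (c powr (-q) / q)"
    using pq c by auto
  with True show ?thesis
    by (cases "x = 0 \<or> y = 0") (auto simp: ennreal_mult_top)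
next
  case False
  then obtain r s where r: "x = ennreal r" "0 \<le> r" and s: "y = ennreal s" "0 \<le> s"
    by (cases x; cases y) auto
  have "r * s = (c * r) * (s / c)"
    using c by simp
  also have "\<dots> \<le> (c * r) powr p / p + (s / c) powr q / q"
    by (rule Youngs_inequality) (use pq c r s in auto)
  also have "\<dots> = c powr p / p * r powr p + c powr (-q) / q * s powr q"
    using c r s by (simp add: powr_mult powr_divide powr_minus divide_simps)
  finally show ?thesis
    using r s c pq
    by (simp add: ennpow_ennreal ennreal_mult'[symmetric] ennreal_plus[symmetric] del: ennreal_plus)
qed

text \<open>The scaling of Young's inequality that turns it into Hoelder's inequality.\<close>

lemma Young_optimal_scaling:
  fixes p q F G :: real
  assumes pq: "1 < p" "1 < q" "1/p + 1/q = 1" and FG: "0 < F" "0 < G"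
  defines "c \<equiv> (G / F) powr (1 / (p * q))"
  shows "c powr p / p * F + c powr (-q) / q * G = F powr (1/p) * G powr (1/q)"
proof -
  have inv: "1/p = 1 - 1/q" "1/q = 1 - 1/p"
    using pq by auto
  have exps: "1/(p*q) * p = 1/q" "1/(p*q) * (-q) = -(1/p)"
    using pq by auto
  have "c powr p * F = (G / F) powr (1/q) * F"
    unfolding c_def powr_powr exps ..
  also have "\<dots> = F powr (1/p) * G powr (1/q)"
    using FG by (simp add: powr_divide inv(1) powr_diff)
  finally have 1: "c powr p * F = F powr (1/p) * G powr (1/q)" .
  have "c powr (-q) * G = F powr (1/p) / G powr (1/p) * G"
    unfolding c_def powr_powr exps using FG by (simp add: powr_minus powr_divide)
  also have "\<dots> = F powr (1/p) * G powr (1/q)"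
    using FG by (simp add: inv(2) powr_diff)
  finally have 2: "c powr (-q) * G = F powr (1/p) * G powr (1/q)" .
  have "c powr p / p * F + c powr (-q) / q * G = (1/p + 1/q) * (F powr (1/p) * G powr (1/q))"
    using 1 2 by (simp add: algebra_simps)
  then show ?thesis
    using pq by simp
qed

lemma nn_integral_Hoelder:
  fixes p q :: real
  assumes pq: "1 < p" "1 < q" "1/p + 1/q = 1"
    and [measurable]: "f \<in> borel_measurable M" "g \<in> borel_measurable M"
  shows "(\<integral>\<^sup>+x. f x * g x \<partial>M) \<le>
    ennpow (\<integral>\<^sup>+x. ennpow (f x) p \<partial>M) (1/p) * ennpow (\<integral>\<^sup>+x. ennpow (g x) q \<partial>M) (1/q)"
proof -
  define F where "F = (\<integral>\<^sup>+x. ennpow (f x) p \<partial>M)"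
  define G where "G = (\<integral>\<^sup>+x. ennpow (g x) q \<partial>M)"
  consider "F = 0 \<or> G = 0" | "F \<noteq> 0" "G \<noteq> 0" "F = top \<or> G = top"
    | Fr Gr where "F = ennreal Fr" "0 < Fr" "G = ennreal Gr" "0 < Gr"
    by (cases F; cases G) (fastforce simp: less_le)+
  then show ?thesis
  proof cases
    case 1
    then have "AE x in M. ennpow (f x) p = 0 \<or> ennpow (g x) q = 0"
      by (auto simp: F_def G_def nn_integral_0_iff_AE elim: AE_mp)
    then have "AE x in M. f x * g x = 0"
      by eventually_elim (auto simp: ennpow_eq_0_iff)
    then have "(\<integral>\<^sup>+x. f x * g x \<partial>M) = 0"
      by (subst nn_integral_0_iff_AE) auto
    then show ?thesis
      by simp
  next
    case 2
    then have "ennpow F (1/p) * ennpow G (1/q) = top"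
      by (auto simp: ennreal_mult_eq_top_iff ennpow_eq_top_iff ennpow_eq_0_iff)
    then show ?thesis
      by (simp add: F_def G_def)
  next
    case 3
    define c where "c = (Gr / Fr) powr (1 / (p * q))"
    have "0 < c"
      using 3 by (simp add: c_def)
    have "(\<integral>\<^sup>+x. f x * g x \<partial>M) \<le> (\<integral>\<^sup>+x. ennreal (c powr p / p) * ennpow (f x) p
        + ennreal (c powr (-q) / q) * ennpow (g x) q \<partial>M)"
      by (intro nn_integral_mono Young_ennreal[OF pq \<open>0 < c\<close>])
    also have "\<dots> = ennreal (c powr p / p) * F + ennreal (c powr (-q) / q) * G"
      by (simp add: nn_integral_add nn_integral_cmult F_def G_def)
    also have "\<dots> = ennreal (c powr p / p * Fr + c powr (-q) / q * Gr)"
      using 3 pq by (simp add: ennreal_mult'[symmetric] ennreal_plus[symmetric] del: ennreal_plus)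
    also have "\<dots> = ennpow F (1/p) * ennpow G (1/q)"
      using 3 Young_optimal_scaling[OF pq, of Fr Gr]
      by (simp add: c_def ennpow_ennreal ennreal_mult')
    finally show ?thesis
      by (simp add: F_def G_def)
  qed
qed

text \<open>\<open>p'\<close> is the exponent conjugate to \<open>p\<close>; Hoelder with \<open>p, p'\<close> and then with
  \<open>q/p', r/p'\<close> gives the three-factor inequality.\<close>

lemma Hoelder3_exponents:
  fixes p q r :: real
  assumes pqr: "1 < p" "1 < q" "1 < r" "1/p + 1/q + 1/r = 1"
  defines "p' \<equiv> 1 / (1/q + 1/r)"
  shows "1 < p'" "1/p + 1/p' = 1" "1 < q / p'" "1 < r / p'" "1 / (q / p') + 1 / (r / p') = 1"
proof -
  have "0 < 1/p" "0 < 1/q + 1/r"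
    using pqr by (simp_all add: add_pos_pos)
  then have "1/q + 1/r < 1"
    using pqr(4) by linarith
  then show "1 < p'" "1/p + 1/p' = 1"
    using pqr \<open>0 < 1/q + 1/r\<close> by (auto simp: p'_def field_simps)
  have "q / p' = 1 + q / r" "r / p' = 1 + r / q"
    using pqr by (simp_all add: p'_def field_simps)
  then show "1 < q / p'" "1 < r / p'"
    using pqr by simp_all
  have "1 / (q / p') + 1 / (r / p') = p' * (1/q + 1/r)"
    by (simp add: algebra_simps)
  also have "\<dots> = 1"
    using \<open>0 < 1/q + 1/r\<close> by (simp add: p'_def)
  finally show "1 / (q / p') + 1 / (r / p') = 1" .
qed

lemma nn_integral_Hoelder3:
  fixes p q r :: real
  assumes pqr: "1 < p" "1 < q" "1 < r" "1/p + 1/q + 1/r = 1"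
    and [measurable]: "f \<in> borel_measurable M" "g \<in> borel_measurable M" "h \<in> borel_measurable M"
  shows "(\<integral>\<^sup>+x. f x * g x * h x \<partial>M) \<le> ennpow (\<integral>\<^sup>+x. ennpow (f x) p \<partial>M) (1/p)
    * ennpow (\<integral>\<^sup>+x. ennpow (g x) q \<partial>M) (1/q) * ennpow (\<integral>\<^sup>+x. ennpow (h x) r \<partial>M) (1/r)"
proof -
  define p' where "p' = 1 / (1/q + 1/r)"
  have p': "1 < p'" "1/p + 1/p' = 1" "0 < p'" and qr: "1 < q / p'" "1 < r / p'"
    and qr_conj: "1 / (q / p') + 1 / (r / p') = 1"
    using Hoelder3_exponents[OF pqr, folded p'_def] by simp_all
  define G where "G = (\<integral>\<^sup>+x. ennpow (g x) q \<partial>M)"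
  define H where "H = (\<integral>\<^sup>+x. ennpow (h x) r \<partial>M)"
  have "(\<integral>\<^sup>+x. ennpow (g x * h x) p' \<partial>M) = (\<integral>\<^sup>+x. ennpow (g x) p' * ennpow (h x) p' \<partial>M)"
    using p' by (simp add: ennpow_mult)
  also have "\<dots> \<le> ennpow (\<integral>\<^sup>+x. ennpow (ennpow (g x) p') (q / p') \<partial>M) (1 / (q / p'))
      * ennpow (\<integral>\<^sup>+x. ennpow (ennpow (h x) p') (r / p') \<partial>M) (1 / (r / p'))"
    by (rule nn_integral_Hoelder[OF qr qr_conj]) auto
  also have "\<dots> = ennpow G (p' / q) * ennpow H (p' / r)"
    using p' by (simp add: ennpow_ennpow G_def H_def)
  finally have "ennpow (\<integral>\<^sup>+x. ennpow (g x * h x) p' \<partial>M) (1/p')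
      \<le> ennpow (ennpow G (p' / q) * ennpow H (p' / r)) (1/p')"
    by (rule ennpow_mono) (use p' in simp)
  also have "\<dots> = ennpow G (1/q) * ennpow H (1/r)"
    using p' pqr by (simp add: ennpow_mult ennpow_ennpow)
  finally have gh: "ennpow (\<integral>\<^sup>+x. ennpow (g x * h x) p' \<partial>M) (1/p')
      \<le> ennpow G (1/q) * ennpow H (1/r)" .
  have "(\<integral>\<^sup>+x. f x * g x * h x \<partial>M) = (\<integral>\<^sup>+x. f x * (g x * h x) \<partial>M)"
    by (simp add: mult.assoc)
  also have "\<dots> \<le> ennpow (\<integral>\<^sup>+x. ennpow (f x) p \<partial>M) (1/p)
      * ennpow (\<integral>\<^sup>+x. ennpow (g x * h x) p' \<partial>M) (1/p')"
    by (rule nn_integral_Hoelder[OF pqr(1) p'(1,2)]) auto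
  also have "\<dots> \<le> ennpow (\<integral>\<^sup>+x. ennpow (f x) p \<partial>M) (1/p) * (ennpow G (1/q) * ennpow H (1/r))"
    by (intro mult_left_mono gh) simp
  finally show ?thesis
    by (simp add: G_def H_def mult.assoc)
qed

lemma ennpow_nn_integral_Hoelder3_three_halves:
  assumes [measurable]: "f \<in> borel_measurable M" "g \<in> borel_measurable M" "h \<in> borel_measurable M"
  shows "ennpow (\<integral>\<^sup>+x. f x * g x * h x \<partial>M) (3/2) \<le> (\<integral>\<^sup>+x. ennpow (f x) (3/2) \<partial>M)
    * ennpow ((\<integral>\<^sup>+x. ennpow (g x) 6 \<partial>M) * (\<integral>\<^sup>+x. ennpow (h x) 6 \<partial>M)) (1/4)"
proof -
  have "(\<integral>\<^sup>+x. f x * g x * h x \<partial>M) \<le> ennpow (\<integral>\<^sup>+x. ennpow (f x) (3/2) \<partial>M) (2/3)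
      * ennpow (\<integral>\<^sup>+x. ennpow (g x) 6 \<partial>M) (1/6) * ennpow (\<integral>\<^sup>+x. ennpow (h x) 6 \<partial>M) (1/6)"
    using nn_integral_Hoelder3[where p="3/2" and q=6 and r=6 and f=f and g=g and h=h and M=M] by simp
  then have "ennpow (\<integral>\<^sup>+x. f x * g x * h x \<partial>M) (3/2) \<le> ennpow (ennpow (\<integral>\<^sup>+x. ennpow (f x) (3/2) \<partial>M) (2/3)
      * ennpow (\<integral>\<^sup>+x. ennpow (g x) 6 \<partial>M) (1/6) * ennpow (\<integral>\<^sup>+x. ennpow (h x) 6 \<partial>M) (1/6)) (3/2)"
    by (rule ennpow_mono) simp
  then show ?thesis
    by (simp add: ennpow_mult ennpow_ennpow mult.assoc)
qed

section \<open>Integrals of powers on the half line\<close>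

lemma nn_integral_powr_from_0:
  fixes b x :: real
  assumes "-1 < b" "0 \<le> x"
  shows "(\<integral>\<^sup>+s. ennreal (s powr b) * indicator {0..x} s \<partial>lborel) = ennreal (x powr (b+1) / (b+1))"
proof -
  have "((\<lambda>s. if s \<in> {0..x} then s powr b else 0) has_integral (x powr (b+1) / (b+1))) UNIV"
    unfolding has_integral_restrict_UNIV by (rule has_integral_powr_from_0[OF assms])
  then have "(\<integral>\<^sup>+s. ennreal (if s \<in> {0..x} then s powr b else 0) \<partial>lborel) = ennreal (x powr (b+1) / (b+1))"
    by (intro nn_integral_has_integral_lborel) auto
  moreover have "ennreal (s powr b) * indicator {0..x} s = ennreal (if s \<in> {0..x} then s powr b else 0)" for s
    by (simp add: indicator_def)
  ultimately show ?thesis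
    by simp
qed

lemma nn_integral_powr_to_inf:
  fixes e a :: real
  assumes "e < -1" "0 < a"
  shows "(\<integral>\<^sup>+s. ennreal (s powr e) * indicator {a..} s \<partial>lborel) = ennreal (- (a powr (e+1)) / (e+1))"
proof -
  have "((\<lambda>s. if s \<in> {a..} then s powr e else 0) has_integral (- (a powr (e+1)) / (e+1))) UNIV"
    unfolding has_integral_restrict_UNIV by (rule has_integral_powr_to_inf[OF assms])
  then have "(\<integral>\<^sup>+s. ennreal (if s \<in> {a..} then s powr e else 0) \<partial>lborel) = ennreal (- (a powr (e+1)) / (e+1))"
    by (intro nn_integral_has_integral_lborel) auto
  moreover have "ennreal (s powr e) * indicator {a..} s = ennreal (if s \<in> {a..} then s powr e else 0)" for s
    by (simp add: indicator_def)
  ultimately show ?thesis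
    by simp
qed

definition powr_conv_const :: "real \<Rightarrow> real \<Rightarrow> real" where
  "powr_conv_const \<alpha> \<beta> = 2 powr (-(\<alpha> + \<beta> + 1)) * (1/(\<beta> + 1) + 1/(\<alpha> + 1))"

lemma powr_conv_const_nonneg: "-1 < \<alpha> \<Longrightarrow> -1 < \<beta> \<Longrightarrow> 0 \<le> powr_conv_const \<alpha> \<beta>"
  by (simp add: powr_conv_const_def)

lemma powr_convolution_split_le:
  fixes \<alpha> \<beta> t s :: real
  assumes a: "\<alpha> \<le> 0" and b: "\<beta> \<le> 0"
  shows "ennreal ((t - s) powr \<alpha> * s powr \<beta>) * indicator {0<..<t} s
    \<le> ennreal ((t / 2) powr \<alpha>) * (ennreal (s powr \<beta>) * indicator {0..t / 2} s)
      + ennreal ((t / 2) powr \<beta>) * (ennreal ((t - s) powr \<alpha>) * indicator {t / 2..t} s)"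
proof -
  consider "s \<notin> {0<..<t}" | "0 < s" "s \<le> t / 2" | "t / 2 < s" "s < t"
    by (cases "s \<in> {0<..<t}"; cases "s \<le> t / 2") auto
  then show ?thesis
  proof cases
    case 2
    then have "(t - s) powr \<alpha> \<le> (t / 2) powr \<alpha>"
      using a by (intro powr_mono2') auto
    then have "(t - s) powr \<alpha> * s powr \<beta> \<le> (t / 2) powr \<alpha> * s powr \<beta>"
      by (rule mult_right_mono) simp
    then show ?thesis
      using 2 by (auto simp: ennreal_mult'[symmetric] intro!: add_increasing2 ennreal_leI)
  next
    case 3
    then have "s powr \<beta> \<le> (t / 2) powr \<beta>"
      using b by (intro powr_mono2') auto
    then have "(t - s) powr \<alpha> * s powr \<beta> \<le> (t / 2) powr \<beta> * (t - s) powr \<alpha>"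
      by (subst mult.commute) (rule mult_right_mono, simp_all)
    then show ?thesis
      using 3 by (auto simp: ennreal_mult'[symmetric] intro!: add_increasing ennreal_leI)
  qed simp
qed

lemma nn_integral_powr_convolution_le:
  fixes \<alpha> \<beta> t :: real
  assumes a: "-1 < \<alpha>" "\<alpha> \<le> 0" and b: "-1 < \<beta>" "\<beta> \<le> 0" and t: "0 < t"
  shows "(\<integral>\<^sup>+s. ennreal ((t - s) powr \<alpha> * s powr \<beta>) * indicator {0<..<t} s \<partial>lborel)
    \<le> ennreal (powr_conv_const \<alpha> \<beta> * t powr (\<alpha> + \<beta> + 1))"
proof -
  define h where "h = t / 2"
  have h: "0 < h" "t - h = h"
    using t by (simp_all add: h_def)
  note split = powr_convolution_split_le[OF a(2) b(2), of t, folded h_def]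
  have "(\<integral>\<^sup>+s. ennreal ((t - s) powr \<alpha>) * indicator {h..t} s \<partial>lborel)
      = (\<integral>\<^sup>+r. ennreal (r powr \<alpha>) * indicator {0..h} r \<partial>lborel)"
    using h by (subst nn_integral_real_affine[where c="-1" and t=t]) (auto intro!: nn_integral_cong simp: indicator_def)
  also have "\<dots> = ennreal (h powr (\<alpha> + 1) / (\<alpha> + 1))"
    using a h by (intro nn_integral_powr_from_0) auto
  finally have right: "(\<integral>\<^sup>+s. ennreal ((t - s) powr \<alpha>) * indicator {h..t} s \<partial>lborel)
      = ennreal (h powr (\<alpha> + 1) / (\<alpha> + 1))" .
  have left: "(\<integral>\<^sup>+s. ennreal (s powr \<beta>) * indicator {0..h} s \<partial>lborel) = ennreal (h powr (\<beta> + 1) / (\<beta> + 1))"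
    using b h by (intro nn_integral_powr_from_0) auto
  have "h powr \<alpha> * h powr (\<beta> + 1) = h powr (\<alpha> + \<beta> + 1)" "h powr \<beta> * h powr (\<alpha> + 1) = h powr (\<alpha> + \<beta> + 1)"
    using powr_add[of h \<alpha> "\<beta> + 1"] powr_add[of h \<beta> "\<alpha> + 1"] by (simp_all add: algebra_simps)
  moreover have "h powr (\<alpha> + \<beta> + 1) = 2 powr (-(\<alpha> + \<beta> + 1)) * t powr (\<alpha> + \<beta> + 1)"
    using powr_minus_divide[of 2 "\<alpha> + \<beta> + 1"] by (simp add: h_def powr_divide)
  ultimately have const: "h powr \<alpha> * (h powr (\<beta> + 1) / (\<beta> + 1)) + h powr \<beta> * (h powr (\<alpha> + 1) / (\<alpha> + 1))
      = powr_conv_const \<alpha> \<beta> * t powr (\<alpha> + \<beta> + 1)"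
    by (simp add: powr_conv_const_def algebra_simps add_divide_distrib)
  have "(\<integral>\<^sup>+s. ennreal ((t - s) powr \<alpha> * s powr \<beta>) * indicator {0<..<t} s \<partial>lborel)
      \<le> (\<integral>\<^sup>+s. ennreal (h powr \<alpha>) * (ennreal (s powr \<beta>) * indicator {0..h} s)
        + ennreal (h powr \<beta>) * (ennreal ((t - s) powr \<alpha>) * indicator {h..t} s) \<partial>lborel)"
    by (rule nn_integral_mono[OF split])
  also have "\<dots> = ennreal (h powr \<alpha>) * (\<integral>\<^sup>+s. ennreal (s powr \<beta>) * indicator {0..h} s \<partial>lborel)
      + ennreal (h powr \<beta>) * (\<integral>\<^sup>+s. ennreal ((t - s) powr \<alpha>) * indicator {h..t} s \<partial>lborel)"
    by (simp add: nn_integral_add nn_integral_cmult)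
  also have "\<dots> = ennreal (powr_conv_const \<alpha> \<beta> * t powr (\<alpha> + \<beta> + 1))"
    unfolding left right const[symmetric] using a b
    by (simp add: ennreal_mult'[symmetric] ennreal_plus[symmetric] del: ennreal_plus)
  finally show ?thesis .
qed

definition powr_tail_const :: "real \<Rightarrow> real \<Rightarrow> real" where
  "powr_tail_const \<gamma> \<delta> = 1/(\<delta> + 1) - 2 powr (\<gamma> + 1) / (\<gamma> + \<delta> + 1)"

lemma powr_tail_const_nonneg:
  assumes "-1 < \<delta>" "\<gamma> + \<delta> < -1"
  shows "0 \<le> powr_tail_const \<gamma> \<delta>"
proof -
  have "2 powr (\<gamma> + 1) / (\<gamma> + \<delta> + 1) \<le> 0" "0 < 1 / (\<delta> + 1)"
    using assms by (simp_all add: divide_nonneg_neg)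
  then show ?thesis
    unfolding powr_tail_const_def by linarith
qed

lemma powr_tail_split_le:
  fixes \<gamma> \<delta> s t :: real
  assumes g: "\<gamma> \<le> 0" and d: "\<delta> \<le> 0" and s: "0 < s"
  shows "ennreal (t powr \<gamma> * (t - s) powr \<delta>) * indicator {s<..} t
    \<le> ennreal (s powr \<gamma>) * (ennreal ((t - s) powr \<delta>) * indicator {s..2 * s} t)
      + ennreal (2 powr (-\<delta>)) * (ennreal (t powr (\<gamma> + \<delta>)) * indicator {2 * s..} t)"
proof -
  consider "t \<le> s" | "s < t" "t \<le> 2 * s" | "2 * s < t"
    by linarith
  then show ?thesis
  proof cases
    case 2
    then have "t powr \<gamma> \<le> s powr \<gamma>"
      using s g by (intro powr_mono2') auto
    then have "t powr \<gamma> * (t - s) powr \<delta> \<le> s powr \<gamma> * (t - s) powr \<delta>"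
      by (rule mult_right_mono) simp
    then show ?thesis
      using 2 by (auto simp: ennreal_mult'[symmetric] intro!: add_increasing2 ennreal_leI)
  next
    case 3
    then have "(t - s) powr \<delta> \<le> (t / 2) powr \<delta>"
      using d s by (intro powr_mono2') auto
    also have "\<dots> = 2 powr (-\<delta>) * t powr \<delta>"
      using powr_minus_divide[of 2 \<delta>] by (simp add: powr_divide)
    finally have "t powr \<gamma> * (t - s) powr \<delta> \<le> t powr \<gamma> * (2 powr (-\<delta>) * t powr \<delta>)"
      by (rule mult_left_mono) simp
    also have "\<dots> = 2 powr (-\<delta>) * t powr (\<gamma> + \<delta>)"
      by (simp add: powr_add)
    finally show ?thesis
      using 3 s by (auto simp: ennreal_mult'[symmetric] intro!: add_increasing ennreal_leI)
  qed simp
qed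

lemma nn_integral_powr_tail_le:
  fixes \<gamma> \<delta> s :: real
  assumes g: "\<gamma> \<le> 0" and d: "-1 < \<delta>" "\<delta> \<le> 0" and gd: "\<gamma> + \<delta> < -1" and s: "0 < s"
  shows "(\<integral>\<^sup>+t. ennreal (t powr \<gamma> * (t - s) powr \<delta>) * indicator {s<..} t \<partial>lborel)
    \<le> ennreal (powr_tail_const \<gamma> \<delta> * s powr (\<gamma> + \<delta> + 1))"
proof -
  note split = powr_tail_split_le[OF g d(2) s]
  have "(\<integral>\<^sup>+t. ennreal ((t - s) powr \<delta>) * indicator {s..2 * s} t \<partial>lborel)
      = (\<integral>\<^sup>+r. ennreal (r powr \<delta>) * indicator {0..s} r \<partial>lborel)"
    by (subst nn_integral_real_affine[where c=1 and t=s]) (auto intro!: nn_integral_cong simp: indicator_def)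
  also have "\<dots> = ennreal (s powr (\<delta> + 1) / (\<delta> + 1))"
    using d s by (intro nn_integral_powr_from_0) auto
  finally have near: "(\<integral>\<^sup>+t. ennreal ((t - s) powr \<delta>) * indicator {s..2 * s} t \<partial>lborel)
      = ennreal (s powr (\<delta> + 1) / (\<delta> + 1))" .
  have far: "(\<integral>\<^sup>+t. ennreal (t powr (\<gamma> + \<delta>)) * indicator {2 * s..} t \<partial>lborel)
      = ennreal (- ((2 * s) powr (\<gamma> + \<delta> + 1)) / (\<gamma> + \<delta> + 1))"
    using gd s by (intro nn_integral_powr_to_inf) auto
  have "s powr \<gamma> * s powr (\<delta> + 1) = s powr (\<gamma> + \<delta> + 1)"
    by (simp add: powr_add[symmetric] add.assoc)
  moreover have "2 powr (-\<delta>) * (2 * s) powr (\<gamma> + \<delta> + 1) = 2 powr (\<gamma> + 1) * s powr (\<gamma> + \<delta> + 1)"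
    using s by (simp add: powr_mult powr_add[symmetric] mult.assoc[symmetric])
  ultimately have const: "s powr \<gamma> * (s powr (\<delta> + 1) / (\<delta> + 1))
      + 2 powr (-\<delta>) * (- ((2 * s) powr (\<gamma> + \<delta> + 1)) / (\<gamma> + \<delta> + 1))
      = powr_tail_const \<gamma> \<delta> * s powr (\<gamma> + \<delta> + 1)"
    by (simp add: powr_tail_const_def algebra_simps diff_divide_distrib)
  have "(\<integral>\<^sup>+t. ennreal (t powr \<gamma> * (t - s) powr \<delta>) * indicator {s<..} t \<partial>lborel)
      \<le> (\<integral>\<^sup>+t. ennreal (s powr \<gamma>) * (ennreal ((t - s) powr \<delta>) * indicator {s..2 * s} t)
        + ennreal (2 powr (-\<delta>)) * (ennreal (t powr (\<gamma> + \<delta>)) * indicator {2 * s..} t) \<partial>lborel)"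
    by (rule nn_integral_mono[OF split])
  also have "\<dots> = ennreal (s powr \<gamma>) * (\<integral>\<^sup>+t. ennreal ((t - s) powr \<delta>) * indicator {s..2 * s} t \<partial>lborel)
      + ennreal (2 powr (-\<delta>)) * (\<integral>\<^sup>+t. ennreal (t powr (\<gamma> + \<delta>)) * indicator {2 * s..} t \<partial>lborel)"
    by (simp add: nn_integral_add nn_integral_cmult)
  also have "\<dots> = ennreal (powr_tail_const \<gamma> \<delta> * s powr (\<gamma> + \<delta> + 1))"
  proof -
    define F where "F = - ((2 * s) powr (\<gamma> + \<delta> + 1)) / (\<gamma> + \<delta> + 1)"
    have "0 \<le> F"
      unfolding F_def using gd by (intro divide_nonpos_neg) auto
    then show ?thesis
      unfolding near far const[symmetric] F_def[symmetric] using d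
      by (simp add: ennreal_mult'[symmetric] ennreal_plus[symmetric] del: ennreal_plus)
  qed
  finally show ?thesis .
qed

section \<open>The gradient of the heat kernel\<close>

lemma nn_integral_lborel_affine:
  fixes f :: "'a::euclidean_space \<Rightarrow> ennreal"
  assumes [measurable]: "f \<in> borel_measurable borel" and "c \<noteq> 0"
  shows "(\<integral>\<^sup>+x. f x \<partial>lborel) = ennreal (\<bar>c\<bar> ^ DIM('a)) * (\<integral>\<^sup>+x. f (t + c *\<^sub>R x) \<partial>lborel)"
  by (subst lborel_affine[OF \<open>c \<noteq> 0\<close>, of t]) (simp add: nn_integral_density nn_integral_distr nn_integral_cmult)

lemma nn_integral_lborel_diff_right:
  fixes f :: "'a::euclidean_space \<Rightarrow> ennreal"
  assumes "f \<in> borel_measurable borel"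
  shows "(\<integral>\<^sup>+x. f (x - y) \<partial>lborel) = (\<integral>\<^sup>+x. f x \<partial>lborel)"
  using nn_integral_lborel_affine[OF assms, of 1 "-y"] by simp

lemma nn_integral_lborel_diff_left:
  fixes f :: "'a::euclidean_space \<Rightarrow> ennreal"
  assumes "f \<in> borel_measurable borel"
  shows "(\<integral>\<^sup>+y. f (x - y) \<partial>lborel) = (\<integral>\<^sup>+x. f x \<partial>lborel)"
  using nn_integral_lborel_affine[OF assms, of "-1" x] by simp

lemma nn_integral_exp_neg_norm_sq_finite:
  assumes "0 < c"
  shows "(\<integral>\<^sup>+z. ennreal (exp (- c * (norm z)\<^sup>2)) \<partial>(lborel :: 'a::euclidean_space measure)) < \<infinity>"
proof -
  have "(sqrt (1 / (2 * c)))\<^sup>2 = 1 / (2 * c)"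
    using assms by simp
  then have "exp (- c * x\<^sup>2) = sqrt (pi / c) * normal_density 0 (sqrt (1 / (2 * c))) x" for x :: real
    using assms
    by (simp add: normal_density_def real_sqrt_divide real_sqrt_mult field_simps del: real_sqrt_divide)
  then have "(\<integral>\<^sup>+x. ennreal (exp (- c * x\<^sup>2)) \<partial>(lborel :: real measure))
      = ennreal (sqrt (pi / c)) * (\<integral>\<^sup>+x. ennreal (normal_density 0 (sqrt (1 / (2 * c))) x) \<partial>lborel)"
    using assms by (simp add: ennreal_mult nn_integral_cmult)
  also have "(\<integral>\<^sup>+x. ennreal (normal_density 0 (sqrt (1 / (2 * c))) x) \<partial>lborel) = 1"
    using assms by (subst nn_integral_eq_integral) auto
  finally have line: "(\<integral>\<^sup>+x. ennreal (exp (- c * x\<^sup>2)) \<partial>(lborel :: real measure)) < \<infinity>"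
    by simp
  have "exp (- c * (norm z)\<^sup>2) = (\<Prod>b\<in>Basis. exp (- c * (z \<bullet> b)\<^sup>2))" for z :: 'a
  proof -
    have "(norm z)\<^sup>2 = (\<Sum>b\<in>Basis. (z \<bullet> b)\<^sup>2)"
      unfolding power2_norm_eq_inner by (subst euclidean_inner) (simp add: power2_eq_square)
    then show ?thesis
      by (simp add: sum_distrib_left exp_sum)
  qed
  then have "(\<integral>\<^sup>+z. ennreal (exp (- c * (norm z)\<^sup>2)) \<partial>(lborel :: 'a measure))
      = (\<integral>\<^sup>+z. (\<Prod>b\<in>Basis. ennreal (exp (- c * (z \<bullet> b)\<^sup>2))) \<partial>(lborel :: 'a measure))"
    by (simp add: prod_ennreal)
  also have "\<dots> = (\<Prod>b\<in>(Basis :: 'a set). \<integral>\<^sup>+x. ennreal (exp (- c * x\<^sup>2)) \<partial>lborel)"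
    by (rule nn_integral_lborel_prod) auto
  also have "\<dots> < \<infinity>"
    using line by (simp add: power_less_top_ennreal)
  finally show ?thesis .
qed

definition grad_heat_norm :: "real \<Rightarrow> real^3 \<Rightarrow> real" where
  "grad_heat_norm \<tau> z = norm (grad_heat_kernel \<tau> z)"

lemma grad_heat_norm_nonneg [simp]: "0 \<le> grad_heat_norm \<tau> z"
  by (simp add: grad_heat_norm_def)

lemma measurable_grad_heat_norm [measurable]:
  assumes [measurable]: "f \<in> borel_measurable M" "g \<in> borel_measurable M"
  shows "(\<lambda>x. grad_heat_norm (f x) (g x)) \<in> borel_measurable M"
  unfolding grad_heat_norm_def grad_heat_kernel_def heat_kernel_def by measurable

lemma grad_heat_norm_eq:
  "0 < \<tau> \<Longrightarrow> grad_heat_norm \<tau> z = (4 * pi * \<tau>) powr (-3/2) * exp (- (norm z)\<^sup>2 / (4 * \<tau>)) / (2 * \<tau>) * norm z"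
  by (simp add: grad_heat_norm_def grad_heat_kernel_def heat_kernel_def)

lemma grad_heat_norm_scale:
  assumes "0 < \<tau>"
  shows "grad_heat_norm \<tau> (sqrt \<tau> *\<^sub>R z) = \<tau> powr (-2) * grad_heat_norm 1 z"
proof -
  have "\<tau> powr (-3/2) * sqrt \<tau> / \<tau> = \<tau> powr (-3/2) * \<tau> powr (1/2) / \<tau> powr 1"
    using assms by (simp add: powr_half_sqrt)
  also have "\<dots> = \<tau> powr (-3/2 + 1/2 - 1)"
    by (simp only: powr_add powr_diff)
  finally have scale: "\<tau> powr (-3/2) * sqrt \<tau> / \<tau> = \<tau> powr (-2)"
    by simp
  have "grad_heat_norm \<tau> (sqrt \<tau> *\<^sub>R z)
      = (4 * pi) powr (-3/2) * exp (- (norm z)\<^sup>2 / 4) / 2 * norm z * (\<tau> powr (-3/2) * sqrt \<tau> / \<tau>)"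
    using assms by (simp add: grad_heat_norm_eq powr_mult power_mult_distrib)
  then show ?thesis
    unfolding scale by (simp add: grad_heat_norm_eq)
qed

lemma nn_integral_grad_heat_norm_powr:
  assumes "0 < \<tau>"
  shows "(\<integral>\<^sup>+z. ennreal (grad_heat_norm \<tau> z powr p) \<partial>lborel)
    = ennreal (\<tau> powr (3/2 - 2 * p)) * (\<integral>\<^sup>+z. ennreal (grad_heat_norm 1 z powr p) \<partial>lborel)"
proof -
  have jacobian: "sqrt \<tau> ^ 3 = \<tau> powr (3/2)"
    using assms by (simp add: powr_half_sqrt[symmetric] powr_realpow[symmetric] powr_powr)
  have scaled: "ennreal (grad_heat_norm \<tau> (0 + sqrt \<tau> *\<^sub>R z) powr p)
      = ennreal (\<tau> powr (-2 * p)) * ennreal (grad_heat_norm 1 z powr p)" for z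
    using assms by (simp add: grad_heat_norm_scale powr_mult powr_powr ennreal_mult[symmetric])
  have "(\<integral>\<^sup>+z. ennreal (grad_heat_norm \<tau> z powr p) \<partial>lborel)
      = ennreal (sqrt \<tau> ^ 3) * (\<integral>\<^sup>+z. ennreal (grad_heat_norm \<tau> (0 + sqrt \<tau> *\<^sub>R z) powr p) \<partial>lborel)"
    using nn_integral_lborel_affine[of "\<lambda>z. ennreal (grad_heat_norm \<tau> z powr p)" "sqrt \<tau>" 0] assms
    by simp
  also have "\<dots> = ennreal (\<tau> powr (3/2)) * (ennreal (\<tau> powr (-2 * p))
      * (\<integral>\<^sup>+z. ennreal (grad_heat_norm 1 z powr p) \<partial>lborel))"
    unfolding scaled jacobian by (subst nn_integral_cmult) auto
  also have "\<dots> = ennreal (\<tau> powr (3/2) * \<tau> powr (-2 * p))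
      * (\<integral>\<^sup>+z. ennreal (grad_heat_norm 1 z powr p) \<partial>lborel)"
    by (simp add: ennreal_mult mult.assoc)
  finally show ?thesis
    by (simp add: powr_add[symmetric])
qed

lemma grad_heat_norm_1_le: "grad_heat_norm 1 z \<le> (4 * pi) powr (-3/2) * exp (- (norm z)\<^sup>2 / 8)"
proof -
  define r where "r = norm z"
  have "r / 2 \<le> 1 + r\<^sup>2 / 8"
    using sum_power2_ge_zero[of "r - 2" 2] by (simp add: power2_eq_square algebra_simps)
  also have "\<dots> \<le> exp (r\<^sup>2 / 8)"
    by (rule exp_ge_add_one_self)
  finally have "exp (- r\<^sup>2 / 4) * (r / 2) \<le> exp (- r\<^sup>2 / 4) * exp (r\<^sup>2 / 8)"
    by (rule mult_left_mono) simp
  also have "\<dots> = exp (- r\<^sup>2 / 8)"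
    by (simp flip: exp_add)
  finally show ?thesis
    by (simp add: grad_heat_norm_eq r_def mult_left_mono)
qed

lemma nn_integral_grad_heat_norm_powr_finite:
  assumes "0 < p"
  shows "(\<integral>\<^sup>+z. ennreal (grad_heat_norm 1 z powr p) \<partial>lborel) < \<infinity>"
proof -
  have "grad_heat_norm 1 z powr p \<le> ((4 * pi) powr (-3/2)) powr p * exp (- (p / 8) * (norm z)\<^sup>2)" for z
  proof -
    have "grad_heat_norm 1 z powr p \<le> ((4 * pi) powr (-3/2) * exp (- (norm z)\<^sup>2 / 8)) powr p"
      using assms grad_heat_norm_1_le by (intro powr_mono2) (auto simp: grad_heat_norm_def)
    moreover have "exp (- (norm z)\<^sup>2 / 8) powr p = exp (- (p / 8) * (norm z)\<^sup>2)"
      by (simp add: exp_powr_real algebra_simps)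
    ultimately show ?thesis
      by (simp add: powr_mult)
  qed
  then have bound: "ennreal (grad_heat_norm 1 z powr p)
      \<le> ennreal (((4 * pi) powr (-3/2)) powr p) * ennreal (exp (- (p / 8) * (norm z)\<^sup>2))" for z
    by (simp add: ennreal_mult[symmetric])
  have "(\<integral>\<^sup>+z. ennreal (grad_heat_norm 1 z powr p) \<partial>lborel)
      \<le> (\<integral>\<^sup>+z. ennreal (((4 * pi) powr (-3/2)) powr p) * ennreal (exp (- (p / 8) * (norm z)\<^sup>2))
        \<partial>(lborel :: (real^3) measure))"
    by (rule nn_integral_mono, rule bound)
  also have "\<dots> < \<infinity>"
    using nn_integral_exp_neg_norm_sq_finite[of "p / 8", where 'a="real^3"] assms
    by (simp add: nn_integral_cmult ennreal_mult_less_top)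
  finally show ?thesis .
qed

definition grad_heat_const :: real where
  "grad_heat_const = enn2real (\<integral>\<^sup>+z. ennreal (grad_heat_norm 1 z powr (6/5)) \<partial>lborel)"

lemma grad_heat_const_nonneg: "0 \<le> grad_heat_const"
  by (simp add: grad_heat_const_def)

lemma nn_integral_grad_heat_norm_powr_6_5:
  assumes "0 < \<tau>"
  shows "(\<integral>\<^sup>+z. ennreal (grad_heat_norm \<tau> z powr (6/5)) \<partial>lborel) = ennreal (grad_heat_const * \<tau> powr (-9/10))"
proof -
  have "(\<integral>\<^sup>+z. ennreal (grad_heat_norm 1 z powr (6/5)) \<partial>lborel) = ennreal grad_heat_const"
    using nn_integral_grad_heat_norm_powr_finite[of "6/5"] by (simp add: grad_heat_const_def less_top)
  then show ?thesis
    unfolding nn_integral_grad_heat_norm_powr[OF assms]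
    using grad_heat_const_nonneg by (simp add: ennreal_mult mult.commute)
qed

lemma mult_powr_split_weights:
  fixes k s a b :: real
  assumes "0 \<le> k" "0 < s"
  shows "(k powr (4/5) * a) * (k powr (1/5) * s powr (-1/8)) * (b * s powr (1/8)) = k * a * b"
proof -
  have "(k powr (4/5) * a) * (k powr (1/5) * s powr (-1/8)) * (b * s powr (1/8))
      = (k powr (4/5) * k powr (1/5)) * a * b * (s powr (-1/8) * s powr (1/8))"
    by (simp only: mult_ac)
  also have "\<dots> = k * a * b"
    using assms by (simp add: powr_add[symmetric])
  finally show ?thesis .
qed

lemma nn_integral_grad_heat_time_weight_le:
  assumes "0 < t"
  shows "(\<integral>\<^sup>+p. ennreal (grad_heat_norm (t - fst p) (x - snd p) powr (6/5) * fst p powr (-3/4))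
      * indicator {0<..<t} (fst p) \<partial>(lborel \<Otimes>\<^sub>M (lborel :: (real^3) measure)))
    \<le> ennreal (grad_heat_const * powr_conv_const (-9/10) (-3/4) * t powr (-13/20))"
proof -
  have "(\<integral>\<^sup>+p. ennreal (grad_heat_norm (t - fst p) (x - snd p) powr (6/5) * fst p powr (-3/4))
      * indicator {0<..<t} (fst p) \<partial>(lborel \<Otimes>\<^sub>M (lborel :: (real^3) measure)))
      = (\<integral>\<^sup>+s. \<integral>\<^sup>+y. ennreal (grad_heat_norm (t - s) (x - y) powr (6/5) * s powr (-3/4))
          * indicator {0<..<t} s \<partial>lborel \<partial>lborel)"
    by (subst lborel.nn_integral_fst[symmetric]) simp_all
  also have "\<dots> = (\<integral>\<^sup>+s. ennreal (grad_heat_const * ((t - s) powr (-9/10) * s powr (-3/4)))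
      * indicator {0<..<t} s \<partial>lborel)"
  proof (intro nn_integral_cong)
    fix s :: real
    show "(\<integral>\<^sup>+y. ennreal (grad_heat_norm (t - s) (x - y) powr (6/5) * s powr (-3/4)) * indicator {0<..<t} s \<partial>lborel)
        = ennreal (grad_heat_const * ((t - s) powr (-9/10) * s powr (-3/4))) * indicator {0<..<t} s"
    proof (cases "s \<in> {0<..<t}")
      case True
      have "(\<integral>\<^sup>+y. ennreal (grad_heat_norm (t - s) (x - y) powr (6/5) * s powr (-3/4)) \<partial>lborel)
          = ennreal (s powr (-3/4)) * (\<integral>\<^sup>+y. ennreal (grad_heat_norm (t - s) (x - y) powr (6/5)) \<partial>lborel)"
        by (simp add: ennreal_mult nn_integral_cmult mult.commute)
      also have "(\<integral>\<^sup>+y. ennreal (grad_heat_norm (t - s) (x - y) powr (6/5)) \<partial>lborel)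
          = (\<integral>\<^sup>+z. ennreal (grad_heat_norm (t - s) z powr (6/5)) \<partial>lborel)"
        by (rule nn_integral_lborel_diff_left) measurable
      also have "\<dots> = ennreal (grad_heat_const * (t - s) powr (-9/10))"
        using True by (simp add: nn_integral_grad_heat_norm_powr_6_5)
      finally show ?thesis
        using True grad_heat_const_nonneg by (simp add: ennreal_mult[symmetric] mult_ac)
    qed simp
  qed
  also have "\<dots> = ennreal grad_heat_const
      * (\<integral>\<^sup>+s. ennreal ((t - s) powr (-9/10) * s powr (-3/4)) * indicator {0<..<t} s \<partial>lborel)"
    using grad_heat_const_nonneg by (simp add: ennreal_mult nn_integral_cmult mult.assoc)
  also have "\<dots> \<le> ennreal grad_heat_const * ennreal (powr_conv_const (-9/10) (-3/4) * t powr (-13/20))"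
    using nn_integral_powr_convolution_le[of "-9/10" "-3/4" t] assms by (intro mult_left_mono) simp_all
  finally show ?thesis
    using grad_heat_const_nonneg powr_conv_const_nonneg[of "-9/10" "-3/4"]
    by (simp add: ennreal_mult[symmetric] mult.assoc)
qed

section \<open>The bilinear estimate\<close>

lemma nn_integral_norm_powr_le_of_Z_norm:
  assumes Z: "Z_norm p T u = ennreal Z" "0 \<le> Z" and p: "0 < p"
  shows "AE s in lborel. s \<in> tint T \<longrightarrow>
    (\<integral>\<^sup>+y. ennreal (norm (u s y) powr p) \<partial>lborel) \<le> ennreal (Z powr p * s powr ((3 - p) / 2))"
proof -
  have "AE s in restrict_space lborel (tint T).
      ennreal (s powr (1/2 * (1 - 3 / p))) * Lp_norm p (u s) \<le> Z_norm p T u"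
    unfolding Z_norm_def by (rule esssup_AE)
  then have "AE s in lborel. s \<in> tint T \<longrightarrow>
      ennreal (s powr (1/2 * (1 - 3 / p))) * Lp_norm p (u s) \<le> ennreal Z"
    unfolding Z(1) by (subst (asm) AE_restrict_space_iff) (auto simp: tint_def)
  then show ?thesis
  proof eventually_elim
    case (elim s)
    show ?case
    proof
      assume "s \<in> tint T"
      then have "0 < s"
        by (simp add: tint_def)
      define I where "I = (\<integral>\<^sup>+y. ennreal (norm (u s y) powr p) \<partial>lborel)"
      have "1/2 * (1 - 3 / p) * p = (p - 3) / 2"
        using p by (simp add: field_simps)
      then have "ennreal (s powr ((p - 3) / 2)) * I = ennpow (ennreal (s powr (1/2 * (1 - 3 / p))) * Lp_norm p (u s)) p"
        using p by (simp add: Lp_norm_def I_def ennpow_mult ennpow_ennpow ennpow_ennreal powr_powr)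
      also have "\<dots> \<le> ennpow (ennreal Z) p"
        using elim \<open>s \<in> tint T\<close> p by (intro ennpow_mono) auto
      finally have le: "ennreal (s powr ((p - 3) / 2)) * I \<le> ennreal (Z powr p)"
        using Z(2) by (simp add: ennpow_ennreal)
      have "I = ennreal (s powr ((3 - p) / 2)) * (ennreal (s powr ((p - 3) / 2)) * I)"
        using \<open>0 < s\<close> by (simp add: mult.assoc[symmetric] ennreal_mult[symmetric] powr_add[symmetric]
          add_divide_distrib[symmetric])
      also have "\<dots> \<le> ennreal (s powr ((3 - p) / 2)) * ennreal (Z powr p)"
        by (intro mult_left_mono le) simp
      finally show "I \<le> ennreal (Z powr p * s powr ((3 - p) / 2))"
        by (simp add: ennreal_mult[symmetric] mult.commute)
    qed
  qed
qed

lemma ennreal_norm_integral_le: "ennreal (norm (integral\<^sup>L M f)) \<le> (\<integral>\<^sup>+x. ennreal (norm (f x)) \<partial>M)"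
  by (cases "integrable M f") (simp_all add: integral_norm_bound_ennreal not_integrable_integral_eq)

lemma pred_greaterThanLessThan [measurable]:
  assumes [measurable]: "f \<in> borel_measurable M" "g \<in> borel_measurable M" "h \<in> borel_measurable M"
  shows "Measurable.pred M (\<lambda>x. (f x :: real) \<in> {g x<..<h x})"
  unfolding greaterThanLessThan_iff by measurable

lemma tint_borel [measurable]: "tint T \<in> sets borel"
  unfolding tint_def by measurable

lemma tint_if_less: "t \<in> tint T \<Longrightarrow> s \<in> {0<..<t} \<Longrightarrow> s \<in> tint T"
  by (auto simp: tint_def intro: order.strict_trans[of _ "ereal t"])

lemma measurable_zero_extension:
  fixes f :: "real \<Rightarrow> real^3 \<Rightarrow> 'b::real_normed_vector"
  assumes "(\<lambda>(t, y). f t y) \<in> borel_measurable (restrict_space (lborel \<Otimes>\<^sub>M lborel) (A \<times> UNIV))"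
    and [measurable]: "A \<in> sets borel"
  shows "(\<lambda>p. if fst p \<in> A then f (fst p) (snd p) else 0) \<in> borel_measurable (borel \<Otimes>\<^sub>M borel)"
proof -
  have "(\<lambda>p. if p \<in> A \<times> UNIV then (case p of (t, y) \<Rightarrow> f t y) else 0) \<in> borel_measurable (lborel \<Otimes>\<^sub>M lborel)"
    using assms(1) by (subst (asm) measurable_restrict_space_iff) auto
  then have "(\<lambda>p. if fst p \<in> A then f (fst p) (snd p) else 0) \<in> borel_measurable (lborel \<Otimes>\<^sub>M lborel)"
    by (rule measurable_cong[THEN iffD1, rotated]) (auto split: prod.splits)
  moreover have "sets (lborel \<Otimes>\<^sub>M lborel :: (real \<times> (real^3)) measure) = sets (borel \<Otimes>\<^sub>M borel)"
    by (intro sets_pair_measure_cong) auto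
  ultimately show ?thesis
    using measurable_cong_sets by blast
qed

definition Cop_L32_const :: real where
  "Cop_L32_const = (grad_heat_const * powr_conv_const (-9/10) (-3/4) * 4) powr (1/4) * grad_heat_const"

definition Cop_Lp_const :: real where
  "Cop_Lp_const = Cop_L32_const powr (4/3) * powr_conv_const (-3/4) (-1/2) powr (1/3)"

lemma Cop_L32_const_nonneg: "0 \<le> Cop_L32_const"
  using grad_heat_const_nonneg by (simp add: Cop_L32_const_def)

lemma Cop_Lp_const_nonneg: "0 \<le> Cop_Lp_const"
  by (simp add: Cop_Lp_const_def)

locale Cop_estimate =
  fixes T :: ereal and u :: "real \<Rightarrow> real^3 \<Rightarrow> real^3" and \<theta> :: "real \<Rightarrow> real^3 \<Rightarrow> real" and Z :: real
  assumes u_measurable: "(\<lambda>(t, y). u t y) \<in> borel_measurable (restrict_space (lborel \<Otimes>\<^sub>M lborel) (tint T \<times> UNIV))"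
    and \<theta>_measurable: "(\<lambda>(t, y). \<theta> t y) \<in> borel_measurable (restrict_space (lborel \<Otimes>\<^sub>M lborel) (tint T \<times> UNIV))"
    and Z_norm_u: "Z_norm 6 T u = ennreal Z"
    and Z_nonneg: "0 \<le> Z"
begin

definition u0 :: "real \<Rightarrow> real^3 \<Rightarrow> real^3" where
  "u0 s y = (if s \<in> tint T then u s y else 0)"

definition \<theta>0 :: "real \<Rightarrow> real^3 \<Rightarrow> real" where
  "\<theta>0 s y = (if s \<in> tint T then \<theta> s y else 0)"

lemma measurable_u0 [measurable]:
  assumes [measurable]: "f \<in> borel_measurable M" "g \<in> borel_measurable M"
  shows "(\<lambda>x. u0 (f x) (g x)) \<in> borel_measurable M"
  using measurable_compose[OF _ measurable_zero_extension[OF u_measurable tint_borel], of "\<lambda>x. (f x, g x)" M]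
  by (simp add: u0_def cong: if_cong)

lemma measurable_\<theta>0 [measurable]:
  assumes [measurable]: "f \<in> borel_measurable M" "g \<in> borel_measurable M"
  shows "(\<lambda>x. \<theta>0 (f x) (g x)) \<in> borel_measurable M"
  using measurable_compose[OF _ measurable_zero_extension[OF \<theta>_measurable tint_borel], of "\<lambda>x. (f x, g x)" M]
  by (simp add: \<theta>0_def cong: if_cong)

lemma nn_integral_u_L6_le:
  "AE s in lborel. s \<in> tint T \<longrightarrow>
    (\<integral>\<^sup>+y. ennreal (norm (u s y) powr 6) \<partial>lborel) \<le> ennreal (Z powr 6 * s powr (-3/2))"
  using nn_integral_norm_powr_le_of_Z_norm[OF Z_norm_u Z_nonneg] by simp

definition Cop_majorant :: "real \<Rightarrow> real^3 \<Rightarrow> ennreal" where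
  "Cop_majorant t x = (\<integral>\<^sup>+s. \<integral>\<^sup>+y. ennreal (grad_heat_norm (t - s) (x - y) * \<bar>\<theta>0 s y\<bar> * norm (u0 s y))
    * indicator {0<..<t} s \<partial>lborel \<partial>lborel)"

lemma abs_Cop_le_majorant:
  assumes t: "t \<in> tint T"
  shows "ennreal \<bar>Cop u \<theta> t x\<bar> \<le> Cop_majorant t x"
proof -
  define g where "g s = (\<integral>y. grad_heat_kernel (t - s) (x - y) \<bullet> (\<theta> s y *\<^sub>R u s y) \<partial>lborel)" for s
  have "ennreal \<bar>Cop u \<theta> t x\<bar> = ennreal (norm (\<integral>s. g s \<partial>(restrict_space lborel {0<..<t})))"
    by (simp add: Cop_def g_def)
  also have "\<dots> \<le> (\<integral>\<^sup>+s. ennreal (norm (g s)) \<partial>(restrict_space lborel {0<..<t}))"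
    by (rule ennreal_norm_integral_le)
  also have "\<dots> = (\<integral>\<^sup>+s. ennreal (norm (g s)) * indicator {0<..<t} s \<partial>lborel)"
    by (rule nn_integral_restrict_space) simp
  also have "\<dots> \<le> Cop_majorant t x"
    unfolding Cop_majorant_def
  proof (intro nn_integral_mono)
    fix s :: real
    show "ennreal (norm (g s)) * indicator {0<..<t} s
      \<le> (\<integral>\<^sup>+y. ennreal (grad_heat_norm (t - s) (x - y) * \<bar>\<theta>0 s y\<bar> * norm (u0 s y)) * indicator {0<..<t} s \<partial>lborel)"
    proof (cases "s \<in> {0<..<t}")
      case True
      have "norm (grad_heat_kernel (t - s) (x - y) \<bullet> (\<theta> s y *\<^sub>R u s y))
          \<le> grad_heat_norm (t - s) (x - y) * \<bar>\<theta>0 s y\<bar> * norm (u0 s y)" for y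
        using Cauchy_Schwarz_ineq2[of "grad_heat_kernel (t - s) (x - y)" "\<theta> s y *\<^sub>R u s y"]
          tint_if_less[OF t True]
        by (simp add: grad_heat_norm_def \<theta>0_def u0_def mult.assoc)
      then have "ennreal (norm (g s))
          \<le> (\<integral>\<^sup>+y. ennreal (grad_heat_norm (t - s) (x - y) * \<bar>\<theta>0 s y\<bar> * norm (u0 s y)) \<partial>lborel)"
        unfolding g_def by (intro order_trans[OF ennreal_norm_integral_le] nn_integral_mono ennreal_leI)
      then show ?thesis
        using True by (simp add: nn_integral_multc)
    qed simp
  qed
  finally show ?thesis .
qed

definition theta_kernel :: "real \<Rightarrow> real^3 \<Rightarrow> ennreal" where
  "theta_kernel t x = (\<integral>\<^sup>+s. \<integral>\<^sup>+y. ennreal (grad_heat_norm (t - s) (x - y) powr (6/5) * \<bar>\<theta>0 s y\<bar> powr (3/2))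
    * indicator {0<..<t} s \<partial>lborel \<partial>lborel)"

lemma nn_integral_u_time_weight_le:
  assumes t: "t \<in> tint T"
  shows "(\<integral>\<^sup>+p. ennreal (norm (u0 (fst p) (snd p)) powr 6 * fst p powr (3/4)) * indicator {0<..<t} (fst p)
      \<partial>(lborel \<Otimes>\<^sub>M (lborel :: (real^3) measure)))
    \<le> ennreal (4 * Z powr 6 * t powr (1/4))"
proof -
  have "0 < t"
    using t by (simp add: tint_def)
  have "(\<integral>\<^sup>+p. ennreal (norm (u0 (fst p) (snd p)) powr 6 * fst p powr (3/4)) * indicator {0<..<t} (fst p)
      \<partial>(lborel \<Otimes>\<^sub>M (lborel :: (real^3) measure)))
      = (\<integral>\<^sup>+s. ennreal (s powr (3/4)) * indicator {0<..<t} s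
          * (\<integral>\<^sup>+y. ennreal (norm (u0 s y) powr 6) \<partial>lborel) \<partial>lborel)"
    by (subst lborel.nn_integral_fst[symmetric])
      (auto intro!: nn_integral_cong simp: nn_integral_cmult[symmetric] ennreal_mult' mult_ac)
  also have "\<dots> \<le> (\<integral>\<^sup>+s. ennreal (Z powr 6) * (ennreal (s powr (-3/4)) * indicator {0..t} s) \<partial>lborel)"
  proof (intro nn_integral_mono_AE)
    show "AE s in lborel. ennreal (s powr (3/4)) * indicator {0<..<t} s * (\<integral>\<^sup>+y. ennreal (norm (u0 s y) powr 6) \<partial>lborel)
        \<le> ennreal (Z powr 6) * (ennreal (s powr (-3/4)) * indicator {0..t} s)"
      using nn_integral_u_L6_le
    proof eventually_elim
      case (elim s)
      show ?case
      proof (cases "s \<in> {0<..<t}")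
        case True
        then have "s \<in> tint T"
          using tint_if_less[OF t] by blast
        then have "ennreal (s powr (3/4)) * (\<integral>\<^sup>+y. ennreal (norm (u0 s y) powr 6) \<partial>lborel)
            \<le> ennreal (s powr (3/4)) * ennreal (Z powr 6 * s powr (-3/2))"
          using elim by (intro mult_left_mono) (simp_all add: u0_def)
        also have "\<dots> = ennreal (Z powr 6) * ennreal (s powr (-3/4))"
          using True by (simp add: ennreal_mult[symmetric] mult.left_commute[of _ "Z powr 6"] powr_add[symmetric])
        finally show ?thesis
          using True by simp
      qed simp
    qed
  qed
  also have "\<dots> = ennreal (Z powr 6) * ennreal (t powr (1/4) / (1/4))"
    using nn_integral_powr_from_0[of "-3/4" t] \<open>0 < t\<close> by (simp add: nn_integral_cmult)
  also have "\<dots> = ennreal (4 * Z powr 6 * t powr (1/4))"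
    by (simp add: ennreal_mult[symmetric] mult_ac)
  finally show ?thesis .
qed


text \<open>Hoelder in \<open>(s, y)\<close> with exponents \<open>3/2, 6, 6\<close> after writing the integrand as
  \<open>(|\<nabla>G|\<^sup>4\<^sup>/\<^sup>5 |\<theta>|) (|\<nabla>G|\<^sup>1\<^sup>/\<^sup>5 s\<^sup>-\<^sup>1\<^sup>/\<^sup>8) (|u| s\<^sup>1\<^sup>/\<^sup>8)\<close>: the weight \<open>s\<^sup>1\<^sup>/\<^sup>8\<close> is what
  lets the \<open>Z\<^sub>6\<close> bound \<open>\<parallel>u(s)\<parallel>\<^sub>6 \<le> Z s\<^sup>-\<^sup>1\<^sup>/\<^sup>4\<close> make the last factor integrable.\<close>

lemma Cop_majorant_Hoelder:
  assumes t: "t \<in> tint T"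
  shows "ennpow (Cop_majorant t x) (3/2) \<le> theta_kernel t x
    * ennreal ((grad_heat_const * powr_conv_const (-9/10) (-3/4) * 4) powr (1/4) * Z powr (3/2) * t powr (-1/10))"
proof -
  have "0 < t"
    using t by (simp add: tint_def)
  define K where "K = grad_heat_const * powr_conv_const (-9/10) (-3/4)"
  have "0 \<le> K"
    using grad_heat_const_nonneg powr_conv_const_nonneg[of "-9/10" "-3/4"] by (simp add: K_def)
  let ?P = "lborel \<Otimes>\<^sub>M (lborel :: (real^3) measure)"
  let ?k = "\<lambda>p. grad_heat_norm (t - fst p) (x - snd p)"
  define f1 where "f1 p = ennreal (?k p powr (4/5) * \<bar>\<theta>0 (fst p) (snd p)\<bar>) * indicator {0<..<t} (fst p)" for p
  define f2 where "f2 p = ennreal (?k p powr (1/5) * fst p powr (-1/8)) * indicator {0<..<t} (fst p)" for p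
  define f3 where "f3 p = ennreal (norm (u0 (fst p) (snd p)) * fst p powr (1/8)) * indicator {0<..<t} (fst p)" for p
  have [measurable]: "f1 \<in> borel_measurable ?P" "f2 \<in> borel_measurable ?P" "f3 \<in> borel_measurable ?P"
    unfolding f1_def f2_def f3_def by measurable
  have split: "ennreal (?k p * \<bar>\<theta>0 (fst p) (snd p)\<bar> * norm (u0 (fst p) (snd p))) * indicator {0<..<t} (fst p)
      = f1 p * f2 p * f3 p" for p
  proof (cases "fst p \<in> {0<..<t}")
    case True
    then have "0 < fst p"
      by simp
    show ?thesis
      unfolding f1_def f2_def f3_def mult_powr_split_weights[OF grad_heat_norm_nonneg \<open>0 < fst p\<close>, symmetric]
      using True by (simp add: ennreal_mult mult_ac)
  qed (simp add: f1_def)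
  have pow1: "(\<integral>\<^sup>+p. ennpow (f1 p) (3/2) \<partial>?P) = theta_kernel t x"
    by (simp add: f1_def theta_kernel_def ennpow_mult ennpow_indicator ennpow_ennreal powr_mult powr_powr
      lborel.nn_integral_fst[symmetric])
  have pow2: "(\<integral>\<^sup>+p. ennpow (f2 p) 6 \<partial>?P) \<le> ennreal (K * t powr (-13/20))"
    using nn_integral_grad_heat_time_weight_le[OF \<open>0 < t\<close>, of x]
    by (simp add: f2_def K_def ennpow_mult ennpow_indicator ennpow_ennreal powr_mult powr_powr)
  have pow3: "(\<integral>\<^sup>+p. ennpow (f3 p) 6 \<partial>?P) \<le> ennreal (4 * Z powr 6 * t powr (1/4))"
    using nn_integral_u_time_weight_le[OF t]
    by (simp add: f3_def ennpow_mult ennpow_indicator ennpow_ennreal powr_mult powr_powr)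
  have "ennpow (Cop_majorant t x) (3/2) = ennpow (\<integral>\<^sup>+p. f1 p * f2 p * f3 p \<partial>?P) (3/2)"
    unfolding Cop_majorant_def split[symmetric] by (subst lborel.nn_integral_fst[symmetric]) simp_all
  also have "\<dots> \<le> theta_kernel t x * ennpow ((\<integral>\<^sup>+p. ennpow (f2 p) 6 \<partial>?P) * (\<integral>\<^sup>+p. ennpow (f3 p) 6 \<partial>?P)) (1/4)"
    using ennpow_nn_integral_Hoelder3_three_halves[of f1 ?P f2 f3] unfolding pow1 by simp
  also have "\<dots> \<le> theta_kernel t x * ennpow (ennreal (K * t powr (-13/20) * (4 * Z powr 6 * t powr (1/4)))) (1/4)"
    using \<open>0 \<le> K\<close> Z_nonneg pow2 pow3 by (intro mult_left_mono ennpow_mono) (simp_all add: ennreal_mult mult_mono)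
  also have "K * t powr (-13/20) * (4 * Z powr 6 * t powr (1/4)) = (K * 4) * Z powr 6 * t powr (-2/5)"
    by (simp add: mult_ac powr_add[symmetric])
  also have "ennpow (ennreal ((K * 4) * Z powr 6 * t powr (-2/5))) (1/4)
      = ennreal ((K * 4) powr (1/4) * Z powr (3/2) * t powr (-1/10))"
    using \<open>0 \<le> K\<close> Z_nonneg by (simp add: ennpow_ennreal powr_mult powr_powr del: powr_numeral)
  finally show ?thesis
    by (simp add: K_def)
qed


definition theta_mass :: "real \<Rightarrow> ennreal" where
  "theta_mass s = (\<integral>\<^sup>+y. ennreal (\<bar>\<theta>0 s y\<bar> powr (3/2)) \<partial>lborel)"

lemma measurable_theta_mass [measurable]: "f \<in> borel_measurable M \<Longrightarrow> (\<lambda>x. theta_mass (f x)) \<in> borel_measurable M"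
  using measurable_compose[of f M borel theta_mass] by (simp add: theta_mass_def)

lemma ennpow_theta_mass: "ennpow (theta_mass s) (4/3) = (Lp_norm (3/2) (\<theta> s))\<^sup>2 * indicator (tint T) s"
  by (cases "s \<in> tint T") (simp_all add: theta_mass_def \<theta>0_def Lp_norm_def ennpow_2[symmetric] ennpow_ennpow)

lemma nn_integral_theta_kernel:
  assumes "0 < t"
  shows "(\<integral>\<^sup>+x. theta_kernel t x \<partial>lborel)
    = ennreal grad_heat_const * (\<integral>\<^sup>+s. ennreal ((t - s) powr (-9/10)) * theta_mass s * indicator {0<..<t} s \<partial>lborel)"
proof -
  let ?f = "\<lambda>s x y. ennreal (grad_heat_norm (t - s) (x - y) powr (6/5) * \<bar>\<theta>0 s y\<bar> powr (3/2)) * indicator {0<..<t} s"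
  have "(\<integral>\<^sup>+x. theta_kernel t x \<partial>lborel) = (\<integral>\<^sup>+s. \<integral>\<^sup>+x. \<integral>\<^sup>+y. ?f s x y \<partial>lborel \<partial>lborel \<partial>lborel)"
    unfolding theta_kernel_def
    by (rule lborel_pair.Fubini[where f="\<lambda>(x, s). \<integral>\<^sup>+y. ?f s x y \<partial>lborel", simplified, symmetric]) measurable
  also have "\<dots> = (\<integral>\<^sup>+s. \<integral>\<^sup>+y. \<integral>\<^sup>+x. ?f s x y \<partial>lborel \<partial>lborel \<partial>lborel)"
    by (intro nn_integral_cong lborel_pair.Fubini[where f="\<lambda>(x, y). ?f s x y" for s, simplified, symmetric])
      measurable
  also have "\<dots> = (\<integral>\<^sup>+s. ennreal grad_heat_const * (ennreal ((t - s) powr (-9/10)) * theta_mass s * indicator {0<..<t} s) \<partial>lborel)"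
  proof (intro nn_integral_cong)
    fix s :: real
    show "(\<integral>\<^sup>+y. \<integral>\<^sup>+x. ?f s x y \<partial>lborel \<partial>lborel)
        = ennreal grad_heat_const * (ennreal ((t - s) powr (-9/10)) * theta_mass s * indicator {0<..<t} s)"
    proof (cases "s \<in> {0<..<t}")
      case True
      have "(\<integral>\<^sup>+x. ennreal (grad_heat_norm (t - s) (x - y) powr (6/5)) \<partial>lborel)
          = ennreal (grad_heat_const * (t - s) powr (-9/10))" for y
      proof -
        have "(\<integral>\<^sup>+x. ennreal (grad_heat_norm (t - s) (x - y) powr (6/5)) \<partial>lborel)
            = (\<integral>\<^sup>+z. ennreal (grad_heat_norm (t - s) z powr (6/5)) \<partial>lborel)"
          by (rule nn_integral_lborel_diff_right) measurable
        then show ?thesis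
          using True by (simp add: nn_integral_grad_heat_norm_powr_6_5)
      qed
      then have "(\<integral>\<^sup>+x. ?f s x y \<partial>lborel)
          = ennreal (\<bar>\<theta>0 s y\<bar> powr (3/2)) * ennreal (grad_heat_const * (t - s) powr (-9/10))" for y
        using True by (simp add: ennreal_mult' nn_integral_cmult mult.commute)
      then have "(\<integral>\<^sup>+y. \<integral>\<^sup>+x. ?f s x y \<partial>lborel \<partial>lborel)
          = theta_mass s * ennreal (grad_heat_const * (t - s) powr (-9/10))"
        unfolding theta_mass_def by (simp add: nn_integral_multc)
      then show ?thesis
        using True grad_heat_const_nonneg by (simp add: ennreal_mult mult_ac)
    qed simp
  qed
  also have "\<dots> = ennreal grad_heat_const
      * (\<integral>\<^sup>+s. ennreal ((t - s) powr (-9/10)) * theta_mass s * indicator {0<..<t} s \<partial>lborel)"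
    by (rule nn_integral_cmult) measurable
  finally show ?thesis .
qed

definition theta_time_weight :: "real \<Rightarrow> ennreal" where
  "theta_time_weight t = (\<integral>\<^sup>+s. ennreal ((t - s) powr (-19/20) * s powr (1/6)) * ennpow (theta_mass s) (4/3)
    * indicator {0<..<t} s \<partial>lborel)"

text \<open>Hoelder in \<open>s\<close> with exponents \<open>4/3, 4\<close>, after splitting \<open>(t - s)\<^sup>-\<^sup>9\<^sup>/\<^sup>1\<^sup>0\<close> as
  \<open>((t - s)\<^sup>-\<^sup>5\<^sup>7\<^sup>/\<^sup>8\<^sup>0 s\<^sup>1\<^sup>/\<^sup>8) ((t - s)\<^sup>-\<^sup>3\<^sup>/\<^sup>1\<^sup>6 s\<^sup>-\<^sup>1\<^sup>/\<^sup>8)\<close>.\<close>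

lemma time_convolution_Hoelder:
  assumes "0 < t"
  shows "ennpow (\<integral>\<^sup>+s. ennreal ((t - s) powr (-9/10)) * theta_mass s * indicator {0<..<t} s \<partial>lborel) (4/3)
    \<le> theta_time_weight t * ennreal ((powr_conv_const (-3/4) (-1/2) * t powr (-1/4)) powr (1/3))"
proof -
  define g where "g s = ennreal ((t - s) powr (-57/80) * s powr (1/8)) * theta_mass s * indicator {0<..<t} s" for s
  define h where "h s = ennreal ((t - s) powr (-3/16) * s powr (-1/8)) * indicator {0<..<t} s" for s
  have [measurable]: "g \<in> borel_measurable lborel" "h \<in> borel_measurable lborel"
    unfolding g_def h_def by measurable
  have split: "ennreal ((t - s) powr (-9/10)) * theta_mass s * indicator {0<..<t} s = g s * h s" for s
  proof (cases "s \<in> {0<..<t}")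
    case True
    have "(t - s) powr (-57/80) * s powr (1/8) * ((t - s) powr (-3/16) * s powr (-1/8))
        = ((t - s) powr (-57/80) * (t - s) powr (-3/16)) * (s powr (1/8) * s powr (-1/8))"
      by (simp only: mult_ac)
    also have "\<dots> = (t - s) powr (-9/10)"
      using True by (simp add: powr_add[symmetric])
    finally have "ennreal ((t - s) powr (-57/80) * s powr (1/8)) * ennreal ((t - s) powr (-3/16) * s powr (-1/8))
        = ennreal ((t - s) powr (-9/10))"
      by (simp add: ennreal_mult[symmetric])
    then show ?thesis
      using True by (simp add: g_def h_def mult_ac)
  qed (simp add: g_def)
  have pow_g: "ennpow (g s) (4/3)
      = ennreal ((t - s) powr (-19/20) * s powr (1/6)) * ennpow (theta_mass s) (4/3) * indicator {0<..<t} s" for s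
    by (simp add: g_def ennpow_mult ennpow_indicator ennpow_ennreal powr_mult powr_powr)
  have pow_h: "ennpow (h s) 4 = ennreal ((t - s) powr (-3/4) * s powr (-1/2)) * indicator {0<..<t} s" for s
    by (simp add: h_def ennpow_mult ennpow_indicator ennpow_ennreal powr_mult powr_powr)
  have "(\<integral>\<^sup>+s. ennreal ((t - s) powr (-9/10)) * theta_mass s * indicator {0<..<t} s \<partial>lborel)
      = (\<integral>\<^sup>+s. g s * h s \<partial>lborel)"
    unfolding split ..
  also have "\<dots> \<le> ennpow (\<integral>\<^sup>+s. ennpow (g s) (4/3) \<partial>lborel) (3/4) * ennpow (\<integral>\<^sup>+s. ennpow (h s) 4 \<partial>lborel) (1/4)"
    using nn_integral_Hoelder[where p="4/3" and q=4 and f=g and g=h] by simp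
  also have "\<dots> \<le> ennpow (theta_time_weight t) (3/4) * ennpow (ennreal (powr_conv_const (-3/4) (-1/2) * t powr (-1/4))) (1/4)"
    unfolding pow_g pow_h theta_time_weight_def
    using nn_integral_powr_convolution_le[of "-3/4" "-1/2" t] assms
    by (intro mult_left_mono ennpow_mono) simp_all
  finally have "ennpow (\<integral>\<^sup>+s. ennreal ((t - s) powr (-9/10)) * theta_mass s * indicator {0<..<t} s \<partial>lborel) (4/3)
      \<le> ennpow (ennpow (theta_time_weight t) (3/4)
        * ennpow (ennreal (powr_conv_const (-3/4) (-1/2) * t powr (-1/4))) (1/4)) (4/3)"
    by (rule ennpow_mono) simp
  also have "\<dots> = theta_time_weight t * ennreal ((powr_conv_const (-3/4) (-1/2) * t powr (-1/4)) powr (1/3))"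
    using powr_conv_const_nonneg[of "-3/4" "-1/2"] by (simp add: ennpow_mult ennpow_ennpow ennpow_ennreal powr_powr)
  finally show ?thesis .
qed


lemma nn_integral_Cop_powr_le:
  assumes t: "t \<in> tint T"
  shows "(\<integral>\<^sup>+x. ennreal (norm (Cop u \<theta> t x) powr (3/2)) \<partial>lborel)
    \<le> ennreal (Cop_L32_const * Z powr (3/2) * t powr (-1/10))
      * (\<integral>\<^sup>+s. ennreal ((t - s) powr (-9/10)) * theta_mass s * indicator {0<..<t} s \<partial>lborel)"
proof -
  have "0 < t"
    using t by (simp add: tint_def)
  define c where "c = (grad_heat_const * powr_conv_const (-9/10) (-3/4) * 4) powr (1/4) * Z powr (3/2) * t powr (-1/10)"
  have "0 \<le> c"
    by (simp add: c_def)
  have "(\<integral>\<^sup>+x. ennreal (norm (Cop u \<theta> t x) powr (3/2)) \<partial>lborel) \<le> (\<integral>\<^sup>+x. theta_kernel t x * ennreal c \<partial>lborel)"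
  proof (intro nn_integral_mono)
    fix x :: "real^3"
    have "ennreal (norm (Cop u \<theta> t x) powr (3/2)) = ennpow (ennreal \<bar>Cop u \<theta> t x\<bar>) (3/2)"
      by (simp add: ennpow_ennreal)
    also have "\<dots> \<le> ennpow (Cop_majorant t x) (3/2)"
      by (intro ennpow_mono abs_Cop_le_majorant t) simp
    also have "\<dots> \<le> theta_kernel t x * ennreal c"
      unfolding c_def by (rule Cop_majorant_Hoelder[OF t])
    finally show "ennreal (norm (Cop u \<theta> t x) powr (3/2)) \<le> theta_kernel t x * ennreal c" .
  qed
  also have "\<dots> = (\<integral>\<^sup>+x. theta_kernel t x \<partial>lborel) * ennreal c"
    by (rule nn_integral_multc) (simp add: theta_kernel_def)
  also have "\<dots> = ennreal (grad_heat_const * c)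
      * (\<integral>\<^sup>+s. ennreal ((t - s) powr (-9/10)) * theta_mass s * indicator {0<..<t} s \<partial>lborel)"
    unfolding nn_integral_theta_kernel[OF \<open>0 < t\<close>]
    using \<open>0 \<le> c\<close> grad_heat_const_nonneg by (simp add: ennreal_mult mult_ac)
  also have "grad_heat_const * c = Cop_L32_const * Z powr (3/2) * t powr (-1/10)"
    by (simp add: c_def Cop_L32_const_def mult_ac)
  finally show ?thesis .
qed

lemma Lp_norm_Cop_le:
  assumes t: "t \<in> tint T"
  shows "(Lp_norm (3/2) (Cop u \<theta> t))\<^sup>2 \<le> ennreal (Cop_Lp_const * Z\<^sup>2 * t powr (-13/60)) * theta_time_weight t"
proof -
  have "0 < t"
    using t by (simp add: tint_def)
  define a where "a = Cop_L32_const * Z powr (3/2) * t powr (-1/10)"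
  define b where "b = powr_conv_const (-3/4) (-1/2) * t powr (-1/4)"
  have "0 \<le> a" "0 \<le> b"
    using Cop_L32_const_nonneg powr_conv_const_nonneg[of "-3/4" "-1/2"] by (simp_all add: a_def b_def)
  have "(Lp_norm (3/2) (Cop u \<theta> t))\<^sup>2 = ennpow (\<integral>\<^sup>+x. ennreal (norm (Cop u \<theta> t x) powr (3/2)) \<partial>lborel) (4/3)"
    by (simp add: Lp_norm_def ennpow_2[symmetric] ennpow_ennpow)
  also have "\<dots> \<le> ennpow (ennreal a
      * (\<integral>\<^sup>+s. ennreal ((t - s) powr (-9/10)) * theta_mass s * indicator {0<..<t} s \<partial>lborel)) (4/3)"
    unfolding a_def by (intro ennpow_mono nn_integral_Cop_powr_le t) simp
  also have "\<dots> \<le> ennreal (a powr (4/3)) * (theta_time_weight t * ennreal (b powr (1/3)))"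
    using \<open>0 \<le> a\<close> time_convolution_Hoelder[OF \<open>0 < t\<close>]
    by (simp add: ennpow_mult ennpow_ennreal b_def mult_left_mono)
  also have "\<dots> = ennreal (a powr (4/3) * b powr (1/3)) * theta_time_weight t"
    by (simp add: ennreal_mult mult_ac)
  also have "a powr (4/3) * b powr (1/3) = Cop_Lp_const * Z\<^sup>2 * t powr (-13/60)"
  proof -
    have "a powr (4/3) = Cop_L32_const powr (4/3) * Z\<^sup>2 * t powr (-2/15)"
      using Z_nonneg Cop_L32_const_nonneg by (simp add: a_def powr_mult powr_powr powr_realpow[symmetric])
    moreover have "b powr (1/3) = powr_conv_const (-3/4) (-1/2) powr (1/3) * t powr (-1/12)"
      using powr_conv_const_nonneg[of "-3/4" "-1/2"] by (simp add: b_def powr_mult powr_powr)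
    moreover have "t powr (-2/15) * t powr (-1/12) = t powr (-13/60)"
      by (simp add: powr_add[symmetric])
    ultimately show ?thesis
      by (simp add: Cop_Lp_const_def mult_ac)
  qed
  finally show ?thesis .
qed

lemma nn_integral_theta_time_weight_le:
  "(\<integral>\<^sup>+t. ennreal (t powr (-13/60)) * theta_time_weight t \<partial>lborel)
    \<le> ennreal (powr_tail_const (-13/60) (-19/20)) * (\<integral>\<^sup>+s. (Lp_norm (3/2) (\<theta> s))\<^sup>2 * indicator (tint T) s \<partial>lborel)"
proof -
  define G where "G t s = ennreal (t powr (-13/60) * (t - s) powr (-19/20))
    * (ennreal (s powr (1/6)) * ennpow (theta_mass s) (4/3)) * indicator {0<..<t} s" for t s :: real
  have [measurable]: "(\<lambda>(t, s). G t s) \<in> borel_measurable (lborel \<Otimes>\<^sub>M lborel)"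
    unfolding G_def by measurable
  have "(\<integral>\<^sup>+t. ennreal (t powr (-13/60)) * theta_time_weight t \<partial>lborel) = (\<integral>\<^sup>+t. \<integral>\<^sup>+s. G t s \<partial>lborel \<partial>lborel)"
    unfolding theta_time_weight_def G_def
    by (intro nn_integral_cong, subst nn_integral_cmult[symmetric]) (auto intro!: nn_integral_cong simp: ennreal_mult mult_ac)
  also have "\<dots> = (\<integral>\<^sup>+s. \<integral>\<^sup>+t. G t s \<partial>lborel \<partial>lborel)"
    using lborel_pair.Fubini[where f="\<lambda>(t, s). G t s"] by simp
  also have "\<dots> \<le> (\<integral>\<^sup>+s. ennreal (powr_tail_const (-13/60) (-19/20)) * ennpow (theta_mass s) (4/3) \<partial>lborel)"
  proof (intro nn_integral_mono)
    fix s :: real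
    show "(\<integral>\<^sup>+t. G t s \<partial>lborel) \<le> ennreal (powr_tail_const (-13/60) (-19/20)) * ennpow (theta_mass s) (4/3)"
    proof (cases "0 < s")
      case True
      have "(\<integral>\<^sup>+t. G t s \<partial>lborel) = (ennreal (s powr (1/6)) * ennpow (theta_mass s) (4/3))
          * (\<integral>\<^sup>+t. ennreal (t powr (-13/60) * (t - s) powr (-19/20)) * indicator {s<..} t \<partial>lborel)"
        using True
        by (subst nn_integral_cmult[symmetric]) (auto intro!: nn_integral_cong simp: G_def indicator_def mult_ac)
      also have "\<dots> \<le> (ennreal (s powr (1/6)) * ennpow (theta_mass s) (4/3))
          * ennreal (powr_tail_const (-13/60) (-19/20) * s powr (-1/6))"
        using nn_integral_powr_tail_le[of "-13/60" "-19/20" s] True by (intro mult_left_mono) simp_all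
      also have "\<dots> = ennreal (s powr (1/6) * s powr (-1/6) * powr_tail_const (-13/60) (-19/20))
          * ennpow (theta_mass s) (4/3)"
        using powr_tail_const_nonneg[of "-19/20" "-13/60"] by (simp add: ennreal_mult mult_ac)
      finally show ?thesis
        using True by (simp add: powr_add[symmetric])
    qed (simp add: G_def)
  qed
  also have "\<dots> = ennreal (powr_tail_const (-13/60) (-19/20))
      * (\<integral>\<^sup>+s. (Lp_norm (3/2) (\<theta> s))\<^sup>2 * indicator (tint T) s \<partial>lborel)"
    by (simp add: nn_integral_cmult ennpow_theta_mass[symmetric])
  finally show ?thesis .
qed

lemma nn_integral_Lp_norm_Cop_le:
  "(\<integral>\<^sup>+t. (Lp_norm (3/2) (Cop u \<theta> t))\<^sup>2 * indicator (tint T) t \<partial>lborel)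
    \<le> ennreal (Cop_Lp_const * Z\<^sup>2 * powr_tail_const (-13/60) (-19/20))
      * (\<integral>\<^sup>+s. (Lp_norm (3/2) (\<theta> s))\<^sup>2 * indicator (tint T) s \<partial>lborel)"
proof -
  define C where "C = Cop_Lp_const * Z\<^sup>2"
  have "(\<integral>\<^sup>+t. (Lp_norm (3/2) (Cop u \<theta> t))\<^sup>2 * indicator (tint T) t \<partial>lborel)
      \<le> (\<integral>\<^sup>+t. ennreal C * (ennreal (t powr (-13/60)) * theta_time_weight t) \<partial>lborel)"
  proof (intro nn_integral_mono)
    fix t :: real
    show "(Lp_norm (3/2) (Cop u \<theta> t))\<^sup>2 * indicator (tint T) t \<le> ennreal C * (ennreal (t powr (-13/60)) * theta_time_weight t)"
      using Lp_norm_Cop_le[of t] Cop_Lp_const_nonneg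
      by (cases "t \<in> tint T") (simp_all add: C_def ennreal_mult mult.assoc)
  qed
  also have "\<dots> = ennreal C * (\<integral>\<^sup>+t. ennreal (t powr (-13/60)) * theta_time_weight t \<partial>lborel)"
    by (rule nn_integral_cmult) (simp add: theta_time_weight_def)
  also have "\<dots> \<le> ennreal C * (ennreal (powr_tail_const (-13/60) (-19/20))
      * (\<integral>\<^sup>+s. (Lp_norm (3/2) (\<theta> s))\<^sup>2 * indicator (tint T) s \<partial>lborel))"
    by (intro mult_left_mono nn_integral_theta_time_weight_le) simp
  finally show ?thesis
    using Cop_Lp_const_nonneg powr_tail_const_nonneg[of "-19/20" "-13/60"] by (simp add: C_def ennreal_mult mult.assoc)
qed

lemma L2Lp_norm_Cop_le:
  "L2Lp_norm T (3/2) (Cop u \<theta>)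
    \<le> ennreal (sqrt (Cop_Lp_const * powr_tail_const (-13/60) (-19/20)) * Z) * L2Lp_norm T (3/2) \<theta>"
proof -
  define C where "C = Cop_Lp_const * powr_tail_const (-13/60) (-19/20)"
  have "0 \<le> C"
    using Cop_Lp_const_nonneg powr_tail_const_nonneg[of "-19/20" "-13/60"] by (simp add: C_def)
  have "L2Lp_norm T (3/2) (Cop u \<theta>)
      \<le> ennpow (ennreal (C * Z\<^sup>2) * (\<integral>\<^sup>+s. (Lp_norm (3/2) (\<theta> s))\<^sup>2 * indicator (tint T) s \<partial>lborel)) (1/2)"
    unfolding L2Lp_norm_def using nn_integral_Lp_norm_Cop_le
    by (intro ennpow_mono) (simp_all add: C_def mult_ac nn_integral_set_ennreal)
  also have "\<dots> = ennreal (sqrt (C * Z\<^sup>2)) * L2Lp_norm T (3/2) \<theta>"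
    using \<open>0 \<le> C\<close> by (simp add: L2Lp_norm_def ennpow_mult ennpow_ennreal powr_half_sqrt nn_integral_set_ennreal)
  finally show ?thesis
    using \<open>0 \<le> C\<close> Z_nonneg by (simp add: C_def real_sqrt_mult)
qed

end

theorem proposition5p1:
  "\<exists>\<kappa>>0. \<forall>(T::ereal) (u::real \<Rightarrow> real^3 \<Rightarrow> real^3) (\<theta>::real \<Rightarrow> real^3 \<Rightarrow> real).
     0 < T \<longrightarrow>
     (\<lambda>(t, y). u t y) \<in> borel_measurable (restrict_space (lborel \<Otimes>\<^sub>M lborel) (tint T \<times> UNIV)) \<longrightarrow>
     Z_norm 6 T u < \<infinity> \<longrightarrow>
     (\<lambda>(t, y). \<theta> t y) \<in> borel_measurable (restrict_space (lborel \<Otimes>\<^sub>M lborel) (tint T \<times> UNIV)) \<longrightarrow>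
     L2Lp_norm T (3/2) \<theta> < \<infinity> \<longrightarrow>
     L2Lp_norm T (3/2) (Cop u \<theta>) \<le> ennreal \<kappa> * Z_norm 6 T u * L2Lp_norm T (3/2) \<theta>"
proof -
  define c where "c = sqrt (Cop_Lp_const * powr_tail_const (-13/60) (-19/20))"
  have "0 \<le> c"
    using Cop_Lp_const_nonneg powr_tail_const_nonneg[of "-19/20" "-13/60"] by (simp add: c_def)
  have "L2Lp_norm T (3/2) (Cop u \<theta>) \<le> ennreal (c + 1) * Z_norm 6 T u * L2Lp_norm T (3/2) \<theta>"
    if "(\<lambda>(t, y). u t y) \<in> borel_measurable (restrict_space (lborel \<Otimes>\<^sub>M lborel) (tint T \<times> UNIV))"
      and "Z_norm 6 T u < \<infinity>"
      and "(\<lambda>(t, y). \<theta> t y) \<in> borel_measurable (restrict_space (lborel \<Otimes>\<^sub>M lborel) (tint T \<times> UNIV))"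
    for T u \<theta>
  proof -
    obtain Z where Z: "Z_norm 6 T u = ennreal Z" "0 \<le> Z"
      using \<open>Z_norm 6 T u < \<infinity>\<close> by (cases "Z_norm 6 T u") auto
    interpret Cop_estimate T u \<theta> Z
      using that Z by unfold_locales
    have "L2Lp_norm T (3/2) (Cop u \<theta>) \<le> ennreal (c * Z) * L2Lp_norm T (3/2) \<theta>"
      unfolding c_def by (rule L2Lp_norm_Cop_le)
    also have "\<dots> \<le> ennreal ((c + 1) * Z) * L2Lp_norm T (3/2) \<theta>"
      using Z(2) by (intro mult_right_mono ennreal_leI) simp_all
    also have "ennreal ((c + 1) * Z) = ennreal (c + 1) * Z_norm 6 T u"
      unfolding Z(1) using \<open>0 \<le> c\<close> Z(2) by (intro ennreal_mult) simp_all
    finally show ?thesis .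
  qed
  moreover have "0 < c + 1"
    using \<open>0 \<le> c\<close> by simp
  ultimately show ?thesis
    by blast
qed

end
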